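(* Let $(X,d)$ be a compact metric space and $f:X\to X$ a continuous map. Then $$\mathcal{E}(f_{\mathcal{K}})=h_{top}(f).$$
   Context: $h_{top}(f)$ is the topological entropy of $f$. For $n\in\mathbb{N}$, $d_n(x,y)=\max_{0\le i\le n-1} d(f^ix,f^iy)$. $\mathcal K(X)$ is the space of nonempty closed subsets of $X$ with the Hausdorff metric, and $f_{\mathcal K}(B)=f(B)$. For $A\subset X$ let $A^\varepsilon_n=\{x\in X: d_n(x,A)<\varepsilon\}$, and for $B,C\in\mathcal K(X)$ let $H^n(B,C)=\inf\{\varepsilon>0: B\subset C^\varepsilon_n \text{ and } C\subset B^\varepsilon_n\}$. For nonempty $\mathcal Z\subset\mathcal K(X)$, $N_{\mathcal K}(\mathcal Z,n,\varepsilon)$ is the smallest cardinality of a set $\mathcal G\subset\mathcal K(X)$ such that every $B\in\mathcal Z$ has some $C\in\mathcal G$ with $H^n(B,C)\le\varepsilon$. The entropy order is $\mathcal E(f_{\mathcal K},\mathcal Z)=\lim_{\varepsilon\to0}\limsup_{n\to\infty}\frac{\log\log N_{\mathcal K}(\mathcal Z,n,\varepsilon)}{n}$ (convention $\log 0=0$), and $\mathcal E(f_{\mathcal K}):=\mathcal E(f_{\mathcal K},\mathcal K(X))$. *)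

theory Defs
  imports "HOL-Analysis.Analysis"
begin

text \<open>Bowen metric d_n(x,y) = max_{0 \<le> i \<le> n-1} d(f^i x, f^i y).
  (The 0 inserted into the Max only matters for n = 0, where it makes the value 0.)\<close>
definition bowen_dist :: "('a::metric_space \<Rightarrow> 'a) \<Rightarrow> nat \<Rightarrow> 'a \<Rightarrow> 'a \<Rightarrow> real" where
  "bowen_dist f n x y = Max (insert 0 ((\<lambda>i. dist ((f ^^ i) x) ((f ^^ i) y)) ` {..<n}))"

definition bowen_setdist :: "('a::metric_space \<Rightarrow> 'a) \<Rightarrow> nat \<Rightarrow> 'a \<Rightarrow> 'a set \<Rightarrow> real" where
  "bowen_setdist f n x A = (INF a\<in>A. bowen_dist f n x a)"

definition bowen_nbhd :: "('a::metric_space \<Rightarrow> 'a) \<Rightarrow> 'a set \<Rightarrow> nat \<Rightarrow> real \<Rightarrow> 'a set \<Rightarrow> 'a set" where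
  "bowen_nbhd f X n \<epsilon> A = {x \<in> X. bowen_setdist f n x A < \<epsilon>}"

definition hausdorff_n :: "('a::metric_space \<Rightarrow> 'a) \<Rightarrow> 'a set \<Rightarrow> nat \<Rightarrow> 'a set \<Rightarrow> 'a set \<Rightarrow> real" where
  "hausdorff_n f X n B C =
     Inf {\<epsilon>. \<epsilon> > 0 \<and> B \<subseteq> bowen_nbhd f X n \<epsilon> C \<and> C \<subseteq> bowen_nbhd f X n \<epsilon> B}"

definition hyperspace :: "'a::topological_space set \<Rightarrow> 'a set set" where
  "hyperspace X = {B. B \<noteq> {} \<and> closed B \<and> B \<subseteq> X}"

definition hyper_cover_num ::
  "('a::metric_space \<Rightarrow> 'a) \<Rightarrow> 'a set \<Rightarrow> 'a set set \<Rightarrow> nat \<Rightarrow> real \<Rightarrow> nat" where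
  "hyper_cover_num f X Z n \<epsilon> =
     (LEAST k. \<exists>G. G \<subseteq> hyperspace X \<and> finite G \<and> card G = k \<and>
                    (\<forall>B\<in>Z. \<exists>C\<in>G. hausdorff_n f X n B C \<le> \<epsilon>))"

text \<open>Entropy order E(f_K, Z) (natural logarithm; Isabelle's ln 0 = 0 matches the
  convention log 0 = 0).\<close>
definition entropy_order_hyper ::
  "('a::metric_space \<Rightarrow> 'a) \<Rightarrow> 'a set \<Rightarrow> 'a set set \<Rightarrow> ereal" where
  "entropy_order_hyper f X Z =
     Lim (at_right (0::real))
       (\<lambda>\<epsilon>. limsup (\<lambda>n. ereal (ln (ln (real (hyper_cover_num f X Z n \<epsilon>))) / real n)))"

definition span_num :: "('a::metric_space \<Rightarrow> 'a) \<Rightarrow> 'a set \<Rightarrow> nat \<Rightarrow> real \<Rightarrow> nat" where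
  "span_num f X n \<epsilon> =
     (LEAST k. \<exists>F. F \<subseteq> X \<and> finite F \<and> card F = k \<and>
                    (\<forall>x\<in>X. \<exists>y\<in>F. bowen_dist f n x y \<le> \<epsilon>))"

definition top_entropy :: "('a::metric_space \<Rightarrow> 'a) \<Rightarrow> 'a set \<Rightarrow> ereal" where
  "top_entropy f X =
     Lim (at_right (0::real))
       (\<lambda>\<epsilon>. limsup (\<lambda>n. ereal (ln (real (span_num f X n \<epsilon>)) / real n)))"

end

theory Submission
  imports Defs
begin

text \<open>
  Let \<open>S(n,\<epsilon>)\<close> be the minimal size of an \<open>(n,\<epsilon>)\<close>-spanning set and \<open>N(n,\<epsilon>)\<close> the covering
  number of the hyperspace. If \<open>F\<close> is a minimal spanning set, every nonempty closed \<open>B\<close> is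
  \<open>\<epsilon>\<close>-close in \<open>H\<^sup>n\<close> to the set of points of \<open>F\<close> that are \<open>\<epsilon>\<close>-close to \<open>B\<close>, so the nonempty
  subsets of \<open>F\<close> form a cover and \<open>N(n,\<epsilon>) \<le> 2\<^bsup>S(n,\<epsilon>)\<^esup>\<close>. Conversely, for a maximal
  \<open>(n,3\<epsilon>)\<close>-separated set \<open>E\<close>, which has at least \<open>S(n,3\<epsilon>)\<close> points, no closed set is
  \<open>\<epsilon>\<close>-close to two distinct nonempty subsets of \<open>E\<close>; hence \<open>2\<^bsup>S(n,3\<epsilon>)\<^esup> \<le> N(n,\<epsilon>) + 1\<close>.
  Taking \<open>log log\<close>, the growth rate of \<open>N(n,\<epsilon>)\<close> is squeezed between those of \<open>S(n,3\<epsilon>)\<close> and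
  \<open>S(n,\<epsilon>)\<close>, which have the same limit as \<open>\<epsilon> \<rightarrow> 0\<close>.
\<close>

lemma bowen_dist_ge: "i < n \<Longrightarrow> dist ((f ^^ i) x) ((f ^^ i) y) \<le> bowen_dist f n x y"
  unfolding bowen_dist_def by (intro Max_ge) auto

lemma bowen_dist_nonneg: "0 \<le> bowen_dist f n x y"
  unfolding bowen_dist_def by (intro Max_ge) auto

lemma bowen_dist_le_iff:
  "bowen_dist f n x y \<le> e \<longleftrightarrow> 0 \<le> e \<and> (\<forall>i<n. dist ((f ^^ i) x) ((f ^^ i) y) \<le> e)"
  unfolding bowen_dist_def by (subst Max_le_iff) auto

lemma bowen_dist_less_iff:
  "bowen_dist f n x y < e \<longleftrightarrow> 0 < e \<and> (\<forall>i<n. dist ((f ^^ i) x) ((f ^^ i) y) < e)"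
  unfolding bowen_dist_def by (subst Max_less_iff) auto

lemma bowen_dist_self [simp]: "bowen_dist f n x x = 0"
  using bowen_dist_le_iff[of f n x x 0] bowen_dist_nonneg[of f n x x] by auto

lemma bowen_dist_commute: "bowen_dist f n x y = bowen_dist f n y x"
  unfolding bowen_dist_def by (simp add: dist_commute)

lemma bowen_dist_triangle: "bowen_dist f n x z \<le> bowen_dist f n x y + bowen_dist f n y z"
proof -
  have "\<forall>i<n. dist ((f ^^ i) x) ((f ^^ i) z) \<le> bowen_dist f n x y + bowen_dist f n y z"
    by (meson add_mono bowen_dist_ge dist_triangle order_trans)
  then show ?thesis
    using bowen_dist_le_iff bowen_dist_nonneg by (metis add_nonneg_nonneg)
qed

lemma funpow_image_subset: "f ` X \<subseteq> X \<Longrightarrow> (f ^^ i) ` X \<subseteq> X"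
  by (induction i) (auto simp: image_subset_iff)

lemma continuous_on_funpow:
  assumes "continuous_on X f" "f ` X \<subseteq> X"
  shows "continuous_on X (f ^^ i)"
proof (induction i)
  case 0
  then show ?case by (simp add: continuous_on_id)
next
  case (Suc i)
  have "continuous_on ((f ^^ i) ` X) f"
    using assms continuous_on_subset funpow_image_subset by blast
  then show ?case
    using continuous_on_compose[OF Suc.IH] by simp
qed

lemma uniformly_small_bowen_dist:
  assumes "compact X" "continuous_on X f" "f ` X \<subseteq> X" "e > 0"
  shows "\<exists>d>0. \<forall>x\<in>X. \<forall>y\<in>X. dist x y < d \<longrightarrow> bowen_dist f n x y < e"
proof (induction n)
  case 0
  show ?case using assms(4) by (auto simp: bowen_dist_less_iff intro: exI[of _ 1])
next
  case (Suc n)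
  then obtain d1 where d1: "d1 > 0" "\<forall>x\<in>X. \<forall>y\<in>X. dist x y < d1 \<longrightarrow> bowen_dist f n x y < e"
    by blast
  have "uniformly_continuous_on X (f ^^ n)"
    using compact_uniformly_continuous[OF continuous_on_funpow[OF assms(2,3)] assms(1)] .
  then obtain d2 where d2: "d2 > 0"
    "\<forall>x\<in>X. \<forall>y\<in>X. dist y x < d2 \<longrightarrow> dist ((f ^^ n) y) ((f ^^ n) x) < e"
    using assms(4) unfolding uniformly_continuous_on_def by blast
  show ?case
  proof (intro exI[of _ "min d1 d2"] conjI ballI impI)
    fix x y assume "x \<in> X" "y \<in> X" "dist x y < min d1 d2"
    then have "bowen_dist f n x y < e" "dist ((f ^^ n) x) ((f ^^ n) y) < e"
      using d1 d2 by auto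
    then show "bowen_dist f (Suc n) x y < e"
      by (auto simp: bowen_dist_less_iff less_Suc_eq)
  qed (use d1 d2 in simp)
qed

lemma finite_bowen_net:
  assumes "compact X" "continuous_on X f" "f ` X \<subseteq> X" "e > 0"
  shows "\<exists>F. F \<subseteq> X \<and> finite F \<and> (\<forall>x\<in>X. \<exists>y\<in>F. bowen_dist f n x y < e)"
proof -
  obtain d where d: "d > 0" "\<forall>x\<in>X. \<forall>y\<in>X. dist x y < d \<longrightarrow> bowen_dist f n x y < e"
    using uniformly_small_bowen_dist[OF assms] by blast
  have "\<exists>F. finite F \<and> F \<subseteq> X \<and> X \<subseteq> (\<Union>y\<in>F. ball y d)"
    using seq_compact_imp_totally_bounded[OF compact_imp_seq_compact[OF assms(1)]] d(1) by simp
  then obtain F where F: "finite F" "F \<subseteq> X" "X \<subseteq> (\<Union>y\<in>F. ball y d)"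
    by (elim exE conjE)
  have "\<exists>y\<in>F. bowen_dist f n x y < e" if "x \<in> X" for x
  proof -
    obtain y where "y \<in> F" "x \<in> ball y d" using F(3) \<open>x \<in> X\<close> by blast
    then have "y \<in> X" "dist x y < d" using F(2) by (auto simp: dist_commute)
    then show ?thesis using d(2) \<open>y \<in> F\<close> \<open>x \<in> X\<close> by blast
  qed
  then show ?thesis using F by blast
qed

lemma bowen_setdist_le: "a \<in> A \<Longrightarrow> bowen_setdist f n x A \<le> bowen_dist f n x a"
  unfolding bowen_setdist_def
  by (rule cINF_lower) (auto intro: bdd_belowI[of _ 0] simp: bowen_dist_nonneg)

lemma bowen_setdist_less_iff:
  "A \<noteq> {} \<Longrightarrow> bowen_setdist f n x A < e \<longleftrightarrow> (\<exists>a\<in>A. bowen_dist f n x a < e)"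
  unfolding bowen_setdist_def
  by (rule cINF_less_iff) (auto intro: bdd_belowI[of _ 0] simp: bowen_dist_nonneg)

lemma subset_bowen_nbhdI:
  assumes "A \<subseteq> X" "\<forall>x\<in>A. \<exists>c\<in>A'. bowen_dist f n x c \<le> r" "r < e"
  shows "A \<subseteq> bowen_nbhd f X n e A'"
proof
  fix x assume "x \<in> A"
  then obtain c where "c \<in> A'" "bowen_dist f n x c \<le> r" using assms(2) by blast
  then have "bowen_setdist f n x A' < e" using bowen_setdist_le[of c A' f n x] assms(3) by linarith
  then show "x \<in> bowen_nbhd f X n e A'" using assms(1) \<open>x \<in> A\<close> unfolding bowen_nbhd_def by blast
qed

lemma hausdorff_n_leI:
  assumes "B \<subseteq> X" "C \<subseteq> X" "0 \<le> \<epsilon>"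
    and "\<forall>x\<in>B. \<exists>c\<in>C. bowen_dist f n x c \<le> \<epsilon>" "\<forall>c\<in>C. \<exists>x\<in>B. bowen_dist f n c x \<le> \<epsilon>"
  shows "hausdorff_n f X n B C \<le> \<epsilon>"
proof (rule dense_ge)
  fix e assume "\<epsilon> < e"
  then have "e \<in> {e. e > 0 \<and> B \<subseteq> bowen_nbhd f X n e C \<and> C \<subseteq> bowen_nbhd f X n e B}"
    using assms(3) subset_bowen_nbhdI[OF assms(1,4)] subset_bowen_nbhdI[OF assms(2,5)] by simp
  then show "hausdorff_n f X n B C \<le> e"
    unfolding hausdorff_n_def by (rule cInf_lower) (auto intro: bdd_belowI[of _ 0])
qed

definition bowen_separated :: "('a::metric_space \<Rightarrow> 'a) \<Rightarrow> nat \<Rightarrow> real \<Rightarrow> 'a set \<Rightarrow> bool" where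
  "bowen_separated f n \<delta> E \<longleftrightarrow> (\<forall>x\<in>E. \<forall>y\<in>E. x \<noteq> y \<longrightarrow> \<delta> < bowen_dist f n x y)"

lemma finite_subset_hyperspace:
  fixes X :: "'a::t1_space set"
  shows "A \<subseteq> X \<Longrightarrow> finite A \<Longrightarrow> A \<noteq> {} \<Longrightarrow> A \<in> hyperspace X"
  unfolding hyperspace_def by (simp add: finite_imp_closed)

lemma ln_of_nat_mono: "(a::nat) \<le> b \<Longrightarrow> ln (real a) \<le> ln (real b)"
  by (cases "a = 0"; cases "b = 0") auto

lemma ln_ln_le_ln_of_le_two_power:
  assumes "(N::nat) \<le> 2 ^ S"
  shows "ln (ln (real N)) \<le> ln (real S)"
proof (cases "N \<le> 2")
  case True
  then consider "N = 0" | "N = 1" | "N = 2" by linarith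
  then have "ln (ln (real N)) \<le> 0"
    by cases (use ln_2_less_1 in auto)
  moreover have "0 \<le> ln (real S)" by (cases "S = 0") auto
  ultimately show ?thesis by linarith
next
  case False
  then have "S \<noteq> 0" using assms by (cases "S = 0") auto
  have "ln (272/100) \<le> ln (real N)" using False by simp
  then have lnN: "1 < ln (real N)" using ln_272_gt_1 by linarith
  have "ln (real N) \<le> ln (2 ^ S)"
    using assms False by (metis of_nat_le_iff of_nat_numeral of_nat_power ln_of_nat_mono)
  also have "\<dots> = real S * ln 2" by (rule ln_realpow)
  finally have "ln (ln (real N)) \<le> ln (real S * ln 2)" using lnN by simp
  also have "\<dots> = ln (real S) + ln (ln 2)" using \<open>S \<noteq> 0\<close> by (simp add: ln_mult)
  also have "\<dots> \<le> ln (real S)" using ln_2_less_1 by simp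
  finally show ?thesis .
qed

lemma ln_le_ln_ln_of_two_power_le:
  assumes "2 ^ S \<le> (N::nat) + 1"
  shows "ln (real S) \<le> ln (ln (real N)) + 2"
proof (cases "S \<le> 1")
  case True
  have "ln (real S) \<le> 0" using True by (cases "S = 0") auto
  moreover have "-2 \<le> ln (ln (real N))"
  proof (cases "N \<le> 1")
    case False
    then have "ln 2 \<le> ln (real N)" by simp
    then have "2/3 \<le> ln (real N)" using ln2_ge_two_thirds by linarith
    then have "ln (2/3) \<le> ln (ln (real N))" by simp
    moreover have "-2 \<le> ln (2/3::real)"
      using ln_le_minus_one[of "3/2"] by (simp add: ln_div)
    ultimately show ?thesis by linarith
  qed (auto simp: le_Suc_eq)
  ultimately show ?thesis by linarith
next
  case False
  then obtain k where k: "S = Suc k" "1 \<le> k" by (cases S) auto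
  have "2 * 2 ^ k \<le> N + 1" using assms k by simp
  then have "2 ^ k \<le> N" using one_le_power[of "2::nat" k] by linarith
  then have "ln (2 ^ k) \<le> ln (real N)"
    by (metis of_nat_le_iff of_nat_numeral of_nat_power ln_of_nat_mono)
  then have "real k * ln 2 \<le> ln (real N)" by (simp add: ln_realpow)
  moreover have "real k * (2/3) \<le> real k * ln 2"
    using ln2_ge_two_thirds by (intro mult_left_mono) auto
  moreover have "real S / 3 \<le> real k * (2/3)" using k by simp
  ultimately have "real S / 3 \<le> ln (real N)" by linarith
  then have "ln (real S / 3) \<le> ln (ln (real N))"
    using k by (intro ln_mono) auto
  moreover have "ln (real S / 3) = ln (real S) - ln 3"
    using k by (simp add: ln_div)
  moreover have "ln (3::real) \<le> 2" using ln_le_minus_one[of 3] by simp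
  ultimately show ?thesis by linarith
qed

lemma antimono_tendsto_SUP_at_right:
  fixes G :: "real \<Rightarrow> ereal"
  assumes "\<And>x y. 0 < x \<Longrightarrow> x \<le> y \<Longrightarrow> G y \<le> G x"
  shows "(G \<longlongrightarrow> (SUP x\<in>{0<..}. G x)) (at_right 0)"
proof (rule order_tendstoI)
  fix a assume "a < (SUP x\<in>{0<..}. G x)"
  then obtain e where e: "0 < e" "a < G e" by (auto simp: less_SUP_iff)
  have "eventually (\<lambda>x. x \<in> {0<..<e}) (at_right (0::real))"
    using e(1) by (rule eventually_at_right_real)
  then show "eventually (\<lambda>x. a < G x) (at_right 0)"
    by eventually_elim (use assms[of _ e] e(2) in force)
next
  fix a assume "(SUP x\<in>{0<..}. G x) < a"
  then show "eventually (\<lambda>x. G x < a) (at_right 0)"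
    by (intro eventually_mono[OF eventually_at_right_less]) (auto intro: le_less_trans[OF SUP_upper])
qed

locale compact_dynamics =
  fixes f :: "'a::metric_space \<Rightarrow> 'a" and X :: "'a set"
  assumes compact: "compact X" and continuous: "continuous_on X f" and invariant: "f ` X \<subseteq> X"
begin

lemma span_num_le_card:
  "F \<subseteq> X \<Longrightarrow> finite F \<Longrightarrow> \<forall>x\<in>X. \<exists>y\<in>F. bowen_dist f n x y \<le> \<epsilon> \<Longrightarrow> span_num f X n \<epsilon> \<le> card F"
  unfolding span_num_def by (rule Least_le) blast

lemma span_num_witness:
  assumes "\<epsilon> > 0"
  obtains F where "F \<subseteq> X" "finite F" "card F = span_num f X n \<epsilon>"
    "\<forall>x\<in>X. \<exists>y\<in>F. bowen_dist f n x y \<le> \<epsilon>"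
proof -
  obtain F where F: "F \<subseteq> X" "finite F" "\<forall>x\<in>X. \<exists>y\<in>F. bowen_dist f n x y < \<epsilon>"
    using finite_bowen_net[OF compact continuous invariant assms] by blast
  then have "\<forall>x\<in>X. \<exists>y\<in>F. bowen_dist f n x y \<le> \<epsilon>"
    by (meson less_imp_le)
  then have "\<exists>F'. F' \<subseteq> X \<and> finite F' \<and> card F' = card F \<and> (\<forall>x\<in>X. \<exists>y\<in>F'. bowen_dist f n x y \<le> \<epsilon>)"
    using F(1,2) by blast
  then have "\<exists>F. F \<subseteq> X \<and> finite F \<and> card F = span_num f X n \<epsilon> \<and> (\<forall>x\<in>X. \<exists>y\<in>F. bowen_dist f n x y \<le> \<epsilon>)"
    unfolding span_num_def by (rule LeastI)
  then show ?thesis using that by blast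
qed

lemma span_num_antimono:
  assumes "0 < \<epsilon>" "\<epsilon> \<le> \<epsilon>'"
  shows "span_num f X n \<epsilon>' \<le> span_num f X n \<epsilon>"
proof -
  obtain F where F: "F \<subseteq> X" "finite F" "card F = span_num f X n \<epsilon>"
    "\<forall>x\<in>X. \<exists>y\<in>F. bowen_dist f n x y \<le> \<epsilon>"
    using span_num_witness[OF assms(1)] by blast
  then have "\<forall>x\<in>X. \<exists>y\<in>F. bowen_dist f n x y \<le> \<epsilon>'" using assms(2) by (meson order_trans)
  then show ?thesis using span_num_le_card[OF F(1,2)] F(3) by simp
qed

lemma card_separated_le_span_num:
  assumes "\<delta> > 0" "E \<subseteq> X" "bowen_separated f n \<delta> E"
  shows "finite E" "card E \<le> span_num f X n (\<delta>/2)"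
proof -
  obtain F where F: "F \<subseteq> X" "finite F" "card F = span_num f X n (\<delta>/2)"
    "\<forall>x\<in>X. \<exists>y\<in>F. bowen_dist f n x y \<le> \<delta>/2"
    using span_num_witness[of "\<delta>/2"] assms(1) by auto
  obtain g where g: "\<And>x. x \<in> E \<Longrightarrow> g x \<in> F \<and> bowen_dist f n x (g x) \<le> \<delta>/2"
    using F(4) assms(2) by (metis subsetD)
  have "inj_on g E"
  proof (rule inj_onI)
    fix x x' assume x: "x \<in> E" "x' \<in> E" "g x = g x'"
    have "bowen_dist f n x x' \<le> bowen_dist f n x (g x) + bowen_dist f n (g x) x'"
      by (rule bowen_dist_triangle)
    also have "bowen_dist f n (g x) x' = bowen_dist f n x' (g x')"
      using x(3) bowen_dist_commute by metis
    finally have "bowen_dist f n x x' \<le> \<delta>" using g[OF x(1)] g[OF x(2)] by linarith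
    then show "x = x'" using assms(3) x(1,2) unfolding bowen_separated_def by (meson not_less)
  qed
  moreover have "g ` E \<subseteq> F" using g by blast
  ultimately show "finite E" "card E \<le> span_num f X n (\<delta>/2)"
    using inj_on_finite card_inj_on_le F(2,3) by metis+
qed

lemma maximal_separated_set:
  assumes "\<delta> > 0"
  obtains E where "E \<subseteq> X" "finite E" "bowen_separated f n \<delta> E" "span_num f X n \<delta> \<le> card E"
proof -
  define Sep where "Sep E \<longleftrightarrow> E \<subseteq> X \<and> bowen_separated f n \<delta> E" for E
  have "\<forall>E. Sep E \<longrightarrow> card E < span_num f X n (\<delta>/2) + 1"
    using card_separated_le_span_num(2)[OF assms] unfolding Sep_def by (simp add: less_Suc_eq_le)
  moreover have "Sep {}" unfolding Sep_def bowen_separated_def by simp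
  ultimately obtain E where E: "Sep E" "\<And>E'. Sep E' \<Longrightarrow> card E' \<le> card E"
    using ex_has_greatest_nat[of Sep "{}" card] by blast
  have EX: "E \<subseteq> X" and sep: "bowen_separated f n \<delta> E" using E(1) unfolding Sep_def by auto
  have fin: "finite E" using card_separated_le_span_num(1)[OF assms EX sep] .
  have "\<exists>y\<in>E. bowen_dist f n x y \<le> \<delta>" if "x \<in> X" for x
  proof (rule ccontr)
    assume "\<not> ?thesis"
    then have far: "\<forall>y\<in>E. \<delta> < bowen_dist f n x y" by auto
    then have "x \<notin> E" using assms by fastforce
    have "Sep (insert x E)"
      using far sep EX \<open>x \<in> X\<close> unfolding Sep_def bowen_separated_def
      by (auto simp: bowen_dist_commute)
    then have "card (insert x E) \<le> card E" by (rule E(2))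
    then show False using fin \<open>x \<notin> E\<close> by simp
  qed
  then show ?thesis using that EX fin sep span_num_le_card[OF EX fin] by blast
qed

lemma bowen_dist_bounded: "\<exists>b. \<forall>x\<in>X. \<forall>y\<in>X. bowen_dist f n x y \<le> b"
proof -
  obtain e where e: "\<forall>x\<in>X. \<forall>y\<in>X. dist x y \<le> e"
    using compact_imp_bounded[OF compact] unfolding bounded_two_points by blast
  have "(f ^^ i) x \<in> X" if "x \<in> X" for i x
    using funpow_image_subset[OF invariant] that by blast
  then have "\<forall>x\<in>X. \<forall>y\<in>X. bowen_dist f n x y \<le> max e 0"
    using e by (auto simp: bowen_dist_le_iff intro: le_max_iff_disj[THEN iffD2])
  then show ?thesis by blast
qed

text \<open>Boundedness of \<open>d\<^sub>n\<close> on \<open>X\<close> makes the set of admissible radii in \<open>hausdorff_n\<close>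
  nonempty, so its \<open>Inf\<close> is a genuine infimum and not the junk value \<open>Inf {}\<close>.\<close>
lemma hausdorff_n_lessD:
  assumes "B \<subseteq> X" "C \<subseteq> X" "B \<noteq> {}" "C \<noteq> {}" "hausdorff_n f X n B C < e"
  shows "\<forall>x\<in>B. \<exists>c\<in>C. bowen_dist f n x c < e"
proof -
  define S where "S = {\<epsilon>. \<epsilon> > 0 \<and> B \<subseteq> bowen_nbhd f X n \<epsilon> C \<and> C \<subseteq> bowen_nbhd f X n \<epsilon> B}"
  obtain b where b: "\<forall>x\<in>X. \<forall>y\<in>X. bowen_dist f n x y \<le> b"
    using bowen_dist_bounded by blast
  have near: "\<forall>x\<in>A. \<exists>c\<in>A'. bowen_dist f n x c \<le> max b 0"
    if "A \<subseteq> X" "A' \<subseteq> X" "A' \<noteq> {}" for A A'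
    using that b by (meson ex_in_conv le_max_iff_disj subsetD)
  have "max b 0 + 1 \<in> S"
    using subset_bowen_nbhdI[OF assms(1) near[OF assms(1,2,4)], where e = "max b 0 + 1"]
      subset_bowen_nbhdI[OF assms(2) near[OF assms(2,1,3)], where e = "max b 0 + 1"]
    unfolding S_def by simp
  then obtain s where s: "s \<in> S" "s < e"
    using cInf_lessD[of S e] assms(5) unfolding hausdorff_n_def S_def by blast
  show ?thesis
  proof
    fix x assume "x \<in> B"
    then have "bowen_setdist f n x C < s" using s(1) unfolding S_def bowen_nbhd_def by blast
    then show "\<exists>c\<in>C. bowen_dist f n x c < e"
      using s(2) assms(4) bowen_setdist_less_iff[of C f n x e] by simp
  qed
qed

lemma hausdorff_n_commute: "hausdorff_n f X n B C = hausdorff_n f X n C B"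
  unfolding hausdorff_n_def by metis

lemma hyper_cover_num_le_card:
  assumes "G \<subseteq> hyperspace X" "finite G" "\<forall>B\<in>hyperspace X. \<exists>C\<in>G. hausdorff_n f X n B C \<le> \<epsilon>"
  shows "hyper_cover_num f X (hyperspace X) n \<epsilon> \<le> card G"
  unfolding hyper_cover_num_def by (rule Least_le) (use assms in blast)

lemma hyperspace_net_of_span:
  assumes "\<epsilon> > 0"
  obtains G where "G \<subseteq> hyperspace X" "finite G" "card G \<le> 2 ^ span_num f X n \<epsilon>"
    "\<forall>B\<in>hyperspace X. \<exists>C\<in>G. hausdorff_n f X n B C \<le> \<epsilon>"
proof -
  obtain F where F: "F \<subseteq> X" "finite F" "card F = span_num f X n \<epsilon>"
    "\<forall>x\<in>X. \<exists>y\<in>F. bowen_dist f n x y \<le> \<epsilon>"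
    using span_num_witness[OF assms] by blast
  define G where "G = Pow F - {{}}"
  have "G \<subseteq> hyperspace X"
    unfolding G_def using F(1,2) by (auto intro: finite_subset_hyperspace finite_subset)
  moreover have "finite G" "card G \<le> 2 ^ span_num f X n \<epsilon>"
    unfolding G_def using F(2,3) card_Diff1_le[of "Pow F" "{}"] by (auto simp: card_Pow)
  moreover have "\<exists>C\<in>G. hausdorff_n f X n B C \<le> \<epsilon>" if B: "B \<in> hyperspace X" for B
  proof -
    define C where "C = {y\<in>F. \<exists>x\<in>B. bowen_dist f n x y \<le> \<epsilon>}"
    have "B \<subseteq> X" "B \<noteq> {}" using B unfolding hyperspace_def by auto
    then have BC: "\<forall>x\<in>B. \<exists>c\<in>C. bowen_dist f n x c \<le> \<epsilon>" and "C \<noteq> {}"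
      using F(4) unfolding C_def by blast+
    have CB: "\<forall>c\<in>C. \<exists>x\<in>B. bowen_dist f n c x \<le> \<epsilon>"
      unfolding C_def by (auto simp: bowen_dist_commute)
    have "C \<in> G" using \<open>C \<noteq> {}\<close> unfolding G_def C_def by auto
    moreover have "C \<subseteq> X" using F(1) unfolding C_def by blast
    then have "hausdorff_n f X n B C \<le> \<epsilon>"
      using \<open>B \<subseteq> X\<close> assms BC CB by (intro hausdorff_n_leI) auto
    ultimately show ?thesis by blast
  qed
  ultimately show ?thesis using that by blast
qed

lemma hyper_cover_num_le_two_power_span_num:
  assumes "\<epsilon> > 0"
  shows "hyper_cover_num f X (hyperspace X) n \<epsilon> \<le> 2 ^ span_num f X n \<epsilon>"
proof -
  obtain G where G: "G \<subseteq> hyperspace X" "finite G" "card G \<le> 2 ^ span_num f X n \<epsilon>"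
    "\<forall>B\<in>hyperspace X. \<exists>C\<in>G. hausdorff_n f X n B C \<le> \<epsilon>"
    using hyperspace_net_of_span[OF assms] by blast
  then show ?thesis using hyper_cover_num_le_card[OF G(1,2,4)] by linarith
qed

lemma hyper_cover_num_witness:
  assumes "\<epsilon> > 0"
  obtains G where "G \<subseteq> hyperspace X" "finite G" "card G = hyper_cover_num f X (hyperspace X) n \<epsilon>"
    "\<forall>B\<in>hyperspace X. \<exists>C\<in>G. hausdorff_n f X n B C \<le> \<epsilon>"
proof -
  obtain G where G: "G \<subseteq> hyperspace X" "finite G" "card G \<le> 2 ^ span_num f X n \<epsilon>"
    "\<forall>B\<in>hyperspace X. \<exists>C\<in>G. hausdorff_n f X n B C \<le> \<epsilon>"
    using hyperspace_net_of_span[OF assms] by blast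
  then have "\<exists>G'. G' \<subseteq> hyperspace X \<and> finite G' \<and> card G' = card G \<and>
      (\<forall>B\<in>hyperspace X. \<exists>C\<in>G'. hausdorff_n f X n B C \<le> \<epsilon>)"
    by (intro exI[of _ G]) simp
  then have "\<exists>G. G \<subseteq> hyperspace X \<and> finite G \<and> card G = hyper_cover_num f X (hyperspace X) n \<epsilon> \<and>
      (\<forall>B\<in>hyperspace X. \<exists>C\<in>G. hausdorff_n f X n B C \<le> \<epsilon>)"
    unfolding hyper_cover_num_def by (rule LeastI)
  then show ?thesis using that by blast
qed

text \<open>A point of \<open>A\<close> is within \<open>3\<epsilon>/2\<close> of a point of \<open>C\<close>, which is within \<open>3\<epsilon>/2\<close> of a
  point of \<open>A'\<close>; separation forces the two points of \<open>E\<close> to coincide.\<close>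
lemma separated_subsets_hausdorff_close_eq:
  assumes "\<epsilon> > 0" "E \<subseteq> X" "bowen_separated f n (3 * \<epsilon>) E"
    and A: "A \<subseteq> E" "A \<noteq> {}" and A': "A' \<subseteq> E" "A' \<noteq> {}" and C: "C \<subseteq> X" "C \<noteq> {}"
    and "hausdorff_n f X n A C \<le> \<epsilon>" "hausdorff_n f X n A' C \<le> \<epsilon>"
  shows "A = A'"
proof -
  have sub: "A1 \<subseteq> A2"
    if A12: "A1 \<subseteq> E" "A1 \<noteq> {}" "A2 \<subseteq> E" "A2 \<noteq> {}"
      and H: "hausdorff_n f X n A1 C \<le> \<epsilon>" "hausdorff_n f X n C A2 \<le> \<epsilon>" for A1 A2
  proof
    fix x assume "x \<in> A1"
    have lt: "\<epsilon> < 3 * \<epsilon> / 2" using assms(1) by simp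
    obtain c where c: "c \<in> C" "bowen_dist f n x c < 3 * \<epsilon> / 2"
      using hausdorff_n_lessD[of A1 C n "3 * \<epsilon> / 2"] A12 H(1) C assms(2) lt \<open>x \<in> A1\<close> by force
    obtain a where a: "a \<in> A2" "bowen_dist f n c a < 3 * \<epsilon> / 2"
      using hausdorff_n_lessD[of C A2 n "3 * \<epsilon> / 2"] A12 H(2) C assms(2) lt c(1) by force
    have "bowen_dist f n x a < 3 * \<epsilon>"
      using bowen_dist_triangle[of f n x a c] a c by linarith
    then have "x = a"
      using assms(3) \<open>x \<in> A1\<close> a(1) A12 unfolding bowen_separated_def by force
    then show "x \<in> A2" using a(1) by simp
  qed
  show ?thesis
    using sub[OF A A'] sub[OF A' A] assms(10,11) by (simp add: hausdorff_n_commute)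
qed

lemma two_power_span_num_le_hyper_cover_num:
  assumes "\<epsilon> > 0"
  shows "2 ^ span_num f X n (3 * \<epsilon>) \<le> hyper_cover_num f X (hyperspace X) n \<epsilon> + 1"
proof -
  obtain G where G: "G \<subseteq> hyperspace X" "finite G" "card G = hyper_cover_num f X (hyperspace X) n \<epsilon>"
    "\<forall>B\<in>hyperspace X. \<exists>C\<in>G. hausdorff_n f X n B C \<le> \<epsilon>"
    using hyper_cover_num_witness[OF assms] by blast
  obtain E where E: "E \<subseteq> X" "finite E" "bowen_separated f n (3 * \<epsilon>) E"
    "span_num f X n (3 * \<epsilon>) \<le> card E"
    using maximal_separated_set[of "3 * \<epsilon>"] assms by auto
  define P where "P = Pow E - {{}}"
  have "P \<subseteq> hyperspace X"
    unfolding P_def using E(1,2) by (auto intro: finite_subset_hyperspace finite_subset)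
  then obtain \<phi> where \<phi>: "\<And>A. A \<in> P \<Longrightarrow> \<phi> A \<in> G \<and> hausdorff_n f X n A (\<phi> A) \<le> \<epsilon>"
    using G(4) by (metis subsetD)
  have "inj_on \<phi> P"
  proof (rule inj_onI)
    fix A A' assume AA: "A \<in> P" "A' \<in> P" "\<phi> A = \<phi> A'"
    have "\<phi> A \<subseteq> X" "\<phi> A \<noteq> {}" using \<phi>[OF AA(1)] G(1) unfolding hyperspace_def by auto
    then show "A = A'"
      using separated_subsets_hausdorff_close_eq[OF assms E(1,3)] AA \<phi>[OF AA(1)] \<phi>[OF AA(2)]
      unfolding P_def by auto
  qed
  then have "card P \<le> card G" using \<phi> G(2) by (intro card_inj_on_le) auto
  moreover have "card P = 2 ^ card E - 1"
    unfolding P_def using E(2) by (simp add: card_Diff_singleton card_Pow)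
  moreover have "(2::nat) ^ span_num f X n (3 * \<epsilon>) \<le> 2 ^ card E"
    using E(4) by (simp add: power_increasing)
  ultimately show ?thesis using G(3) one_le_power[of 2 "card E"] by linarith
qed

definition span_growth :: "real \<Rightarrow> ereal" where
  "span_growth \<epsilon> = limsup (\<lambda>n. ereal (ln (real (span_num f X n \<epsilon>)) / real n))"

definition hyper_growth :: "real \<Rightarrow> ereal" where
  "hyper_growth \<epsilon> =
     limsup (\<lambda>n. ereal (ln (ln (real (hyper_cover_num f X (hyperspace X) n \<epsilon>))) / real n))"

lemma span_growth_antimono: "0 < \<epsilon> \<Longrightarrow> \<epsilon> \<le> \<epsilon>' \<Longrightarrow> span_growth \<epsilon>' \<le> span_growth \<epsilon>"
  unfolding span_growth_def
  by (intro Limsup_mono always_eventually allI ereal_less_eq(3)[THEN iffD2]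
      divide_right_mono ln_of_nat_mono span_num_antimono) auto

lemma hyper_growth_le_span_growth: "0 < \<epsilon> \<Longrightarrow> hyper_growth \<epsilon> \<le> span_growth \<epsilon>"
  unfolding span_growth_def hyper_growth_def
  by (intro Limsup_mono always_eventually allI ereal_less_eq(3)[THEN iffD2] divide_right_mono
      ln_ln_le_ln_of_le_two_power hyper_cover_num_le_two_power_span_num) auto

lemma span_growth_triple_le_hyper_growth:
  assumes "0 < \<epsilon>"
  shows "span_growth (3 * \<epsilon>) \<le> hyper_growth \<epsilon>"
proof -
  define a where "a n = ln (ln (real (hyper_cover_num f X (hyperspace X) n \<epsilon>))) / real n" for n
  have "ln (real (span_num f X n (3 * \<epsilon>))) / real n \<le> 2 / real n + a n" for n
  proof -
    have "ln (real (span_num f X n (3 * \<epsilon>))) / real n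
        \<le> (ln (ln (real (hyper_cover_num f X (hyperspace X) n \<epsilon>))) + 2) / real n"
      using assms by (intro divide_right_mono ln_le_ln_ln_of_two_power_le
          two_power_span_num_le_hyper_cover_num) auto
    then show ?thesis unfolding a_def by (simp add: add_divide_distrib)
  qed
  then have "span_growth (3 * \<epsilon>) \<le> limsup (\<lambda>n. ereal (2 / real n) + ereal (a n))"
    unfolding span_growth_def by (intro Limsup_mono always_eventually) simp
  also have "\<dots> = ereal 0 + limsup (\<lambda>n. ereal (a n))"
    using lim_const_over_n[of "2::real"] by (intro ereal_limsup_lim_add) auto
  also have "\<dots> = hyper_growth \<epsilon>" unfolding hyper_growth_def a_def by simp
  finally show ?thesis .
qed

lemma hyper_growth_span_growth_same_limit:
  "Lim (at_right 0) hyper_growth = Lim (at_right 0) span_growth"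
proof -
  define L where "L = (SUP x\<in>{0<..}. span_growth x)"
  have span_lim: "(span_growth \<longlongrightarrow> L) (at_right 0)"
    unfolding L_def by (rule antimono_tendsto_SUP_at_right) (rule span_growth_antimono)
  have "((\<lambda>x. 3 * x) \<longlongrightarrow> 0) (at_right (0::real))"
    using tendsto_mult_left[OF tendsto_ident_at, of "3::real" 0 "{0<..}"] by simp
  then have "filterlim (\<lambda>x. 3 * x) (at_right 0) (at_right (0::real))"
    unfolding filterlim_at by (auto intro: eventually_mono[OF eventually_at_right_less])
  then have triple_lim: "((\<lambda>x. span_growth (3 * x)) \<longlongrightarrow> L) (at_right 0)"
    by (rule filterlim_compose[OF span_lim])
  have "eventually (\<lambda>x. span_growth (3 * x) \<le> hyper_growth x) (at_right 0)"
    by (rule eventually_mono[OF eventually_at_right_less]) (rule span_growth_triple_le_hyper_growth)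
  moreover have "eventually (\<lambda>x. hyper_growth x \<le> span_growth x) (at_right 0)"
    by (rule eventually_mono[OF eventually_at_right_less]) (rule hyper_growth_le_span_growth)
  ultimately have "(hyper_growth \<longlongrightarrow> L) (at_right 0)"
    using triple_lim span_lim by (rule tendsto_sandwich)
  then show ?thesis
    using tendsto_Lim[OF trivial_limit_at_right_real] span_lim by metis
qed

end

theorem theorem1p3:
  fixes f :: "'a::metric_space \<Rightarrow> 'a" and X :: "'a set"
  assumes "compact X" and "continuous_on X f" and "f ` X \<subseteq> X"
  shows "entropy_order_hyper f X (hyperspace X) = top_entropy f X"
proof -
  interpret compact_dynamics f X
    using assms by unfold_locales
  show ?thesis
    using hyper_growth_span_growth_same_limit
    unfolding entropy_order_hyper_def top_entropy_def hyper_growth_def[abs_def] span_growth_def[abs_def] .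
qed

end
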